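(* Let $H$ be an $r$-graph with $h$ vertices. Then $$C_r(n,H)=O\!\left(n^{\frac{h-r}{h}}\cdot h^{2r+\frac{r}{h}}\right).$$
   Context: An $r$-graph is an $r$-uniform hypergraph; $K_n^{(r)}$ is the complete $r$-graph on $n$ vertices. A copy of an $r$-graph $H$ in $K_n^{(r)}$ is a subhypergraph isomorphic to $H$. An $(n,r,H)$-local coloring with $k$ colors is a family of edge-colorings $f_v:E(K_n^{(r)})\to[k]$, one per vertex $v$, such that for every copy $T$ of $H$ there is $u\in V(T)$ with $f_u$ injective on $E(T)$. $C_r(n,H)$ is the minimum such $k$. *)

theory Defs
  imports Complex_Main
begin

definition complete_edges :: "nat \<Rightarrow> nat \<Rightarrow> nat set set" where
  "complete_edges n r = {e. e \<subseteq> {..<n} \<and> card e = r}"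

definition is_rgraph :: "nat \<Rightarrow> 'a set \<Rightarrow> 'a set set \<Rightarrow> bool" where
  "is_rgraph r V E \<longleftrightarrow> finite V \<and> E \<subseteq> {e. e \<subseteq> V \<and> card e = r}"

definition is_copy :: "nat \<Rightarrow> 'a set \<Rightarrow> 'a set set \<Rightarrow> nat set \<Rightarrow> nat set set \<Rightarrow> bool" where
  "is_copy n V E W F \<longleftrightarrow> W \<subseteq> {..<n} \<and> (\<exists>g. bij_betw g V W \<and> F = (\<lambda>e. g ` e) ` E)"

text \<open>An (n,r,H)-local colouring with k colours (colours {1..k}): one edge colouring
  f v per vertex v, such that every copy T of H has a vertex u with f u injective on E(T).\<close>
definition local_coloring ::
  "nat \<Rightarrow> nat \<Rightarrow> 'a set \<Rightarrow> 'a set set \<Rightarrow> nat \<Rightarrow> (nat \<Rightarrow> nat set \<Rightarrow> nat) \<Rightarrow> bool" where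
  "local_coloring n r V E k f \<longleftrightarrow>
     (\<forall>v<n. \<forall>e\<in>complete_edges n r. f v e \<in> {1..k}) \<and>
     (\<forall>W F. is_copy n V E W F \<longrightarrow> (\<exists>u\<in>W. inj_on (f u) F))"

definition local_chromatic :: "nat \<Rightarrow> nat \<Rightarrow> 'a set \<Rightarrow> 'a set set \<Rightarrow> nat" where
  "local_chromatic r n V E = (LEAST k. \<exists>f. local_coloring n r V E k f)"

end

(* Color each pair (v, e) of a vertex v and an edge e of K_n^(r) uniformly at random with
  k colors, f_v(e) being the color of (v, e). For an h-set W, the bad event A_W says that no
  vertex of W sees the binom(h,r) edges inside W in distinct colors. For a single vertex a
  color clash has probability at most binom(h,r)^2/k, and the h vertices of W use disjoint
  coordinates, so Pr[A_W] <= (binom(h,r)^2/k)^h. A_W depends only on the coordinates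
  W x E(W), hence is independent of all A_W' with W' sharing no edge with W; there are at most
  binom(h,r) n^(h-r) such W'. The symmetric local lemma (4pd <= 1) yields a coloring avoiding
  every A_W as soon as k^h >= 4 binom(h,r)^(2h+1) n^(h-r), which holds for
  k ~ 4 n^((h-r)/h) h^(2r+r/h). Every copy of H spans an h-set W, and its edges are among the
  edges inside W. *)

theory Submission
  imports Defs "HOL-Library.FuncSet"
begin

text \<open>The symmetric Lovasz local lemma for the uniform distribution on a finite set \<open>\<Omega>\<close>:
  probabilities are stated as cardinalities, and mutual independence of \<open>A i\<close> from the
  events outside its neighbourhood \<open>N i\<close> is only used through \<open>conditional_bound\<close>.\<close>

locale counting_local_lemma =
  fixes \<Omega> :: "'w set" and A :: "'i \<Rightarrow> 'w set" and I :: "'i set"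
    and N :: "'i \<Rightarrow> 'i set" and d p :: real
  assumes finite_\<Omega>: "finite \<Omega>" and \<Omega>_nonempty: "\<Omega> \<noteq> {}" and finite_I: "finite I"
    and N_subset: "i \<in> I \<Longrightarrow> N i \<subseteq> I"
    and card_N_le: "i \<in> I \<Longrightarrow> real (card (N i)) \<le> d"
    and d_ge_1: "1 \<le> d" and p_nonneg: "0 \<le> p" and p_d_le: "4 * p * d \<le> 1"
    and conditional_bound: "i \<in> I \<Longrightarrow> T \<subseteq> I - N i - {i} \<Longrightarrow>
       real (card (A i \<inter> (\<Omega> - \<Union>(A ` T)))) \<le> p * real (card (\<Omega> - \<Union>(A ` T)))"
begin

definition avoiding :: "'i set \<Rightarrow> 'w set" where
  "avoiding T = \<Omega> - \<Union>(A ` T)"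

text \<open>The induction hypothesis of the usual proof: conditioned on avoiding the events in
  \<open>S\<close>, every other event has probability at most \<open>1 / (2 d)\<close>.\<close>

definition avoidance_bound :: "'i set \<Rightarrow> bool" where
  "avoidance_bound S \<longleftrightarrow> 0 < card (avoiding S) \<and>
     (\<forall>i \<in> I - S. real (card (A i \<inter> avoiding S)) \<le> real (card (avoiding S)) / (2 * d))"

lemma finite_avoiding: "finite (avoiding T)"
  using finite_\<Omega> by (simp add: avoiding_def)

lemma card_avoiding_Diff_le:
  assumes "S \<subseteq> I" "i \<in> I" and IH: "\<And>S'. S' \<subset> S \<Longrightarrow> avoidance_bound S'"
  shows "real (card (avoiding (S - N i))) \<le> 2 * real (card (avoiding S))"
proof (cases "S \<inter> N i = {}")
  case True
  then have "S - N i = S" by blast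
  then show ?thesis by simp
next
  case False
  let ?S' = "S - N i"
  have bound: "avoidance_bound ?S'" using False by (intro IH) blast
  have finite_S: "finite (S \<inter> N i)" using assms(1) finite_I by (blast intro: finite_subset)
  have "avoiding ?S' \<subseteq> avoiding S \<union> (\<Union>j \<in> S \<inter> N i. A j \<inter> avoiding ?S')"
    by (auto simp: avoiding_def)
  then have "card (avoiding ?S') \<le> card (avoiding S \<union> (\<Union>j \<in> S \<inter> N i. A j \<inter> avoiding ?S'))"
    by (intro card_mono) (simp_all add: finite_avoiding finite_S)
  also have "\<dots> \<le> card (avoiding S) + card (\<Union>j \<in> S \<inter> N i. A j \<inter> avoiding ?S')"
    by (rule card_Un_le)
  also have "card (\<Union>j \<in> S \<inter> N i. A j \<inter> avoiding ?S') \<le> (\<Sum>j \<in> S \<inter> N i. card (A j \<inter> avoiding ?S'))"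
    using finite_S by (rule card_UN_le)
  finally have "real (card (avoiding ?S'))
      \<le> real (card (avoiding S)) + (\<Sum>j \<in> S \<inter> N i. real (card (A j \<inter> avoiding ?S')))"
    by (simp flip: of_nat_sum of_nat_add)
  also have "(\<Sum>j \<in> S \<inter> N i. real (card (A j \<inter> avoiding ?S')))
      \<le> (\<Sum>j \<in> S \<inter> N i. real (card (avoiding ?S')) / (2 * d))"
    using bound N_subset[OF \<open>i \<in> I\<close>] by (intro sum_mono) (auto simp: avoidance_bound_def)
  also have "\<dots> = real (card (S \<inter> N i)) * (real (card (avoiding ?S')) / (2 * d))"
    by simp
  also have "\<dots> \<le> d * (real (card (avoiding ?S')) / (2 * d))"
  proof (rule mult_right_mono)
    have "card (S \<inter> N i) \<le> card (N i)"
      using N_subset[OF \<open>i \<in> I\<close>] finite_I by (intro card_mono) (auto intro: finite_subset)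
    then show "real (card (S \<inter> N i)) \<le> d" using card_N_le[OF \<open>i \<in> I\<close>] by linarith
  qed (use d_ge_1 in simp)
  also have "\<dots> = real (card (avoiding ?S')) / 2"
    using d_ge_1 by simp
  finally show ?thesis by simp
qed

lemma card_event_avoiding_le:
  assumes "S \<subseteq> I" "i \<in> I - S" and IH: "\<And>S'. S' \<subset> S \<Longrightarrow> avoidance_bound S'"
  shows "real (card (A i \<inter> avoiding S)) \<le> real (card (avoiding S)) / (2 * d)"
proof -
  have "card (A i \<inter> avoiding S) \<le> card (A i \<inter> avoiding (S - N i))"
    by (intro card_mono) (simp add: finite_avoiding, auto simp: avoiding_def)
  then have "real (card (A i \<inter> avoiding S)) \<le> real (card (A i \<inter> avoiding (S - N i)))"
    by simp
  also have "\<dots> \<le> p * real (card (avoiding (S - N i)))"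
    using conditional_bound[of i "S - N i"] assms(1,2) by (auto simp: avoiding_def)
  also have "\<dots> \<le> p * (2 * real (card (avoiding S)))"
    using card_avoiding_Diff_le[OF assms(1) _ IH] assms(2) p_nonneg by (simp add: mult_left_mono)
  also have "\<dots> \<le> real (card (avoiding S)) / (2 * d)"
  proof -
    have "2 * p \<le> 1 / (2 * d)" using p_d_le d_ge_1 by (simp add: field_simps)
    then have "2 * p * real (card (avoiding S)) \<le> 1 / (2 * d) * real (card (avoiding S))"
      by (rule mult_right_mono) simp
    then show ?thesis by simp
  qed
  finally show ?thesis .
qed

lemma card_avoiding_pos:
  assumes "S \<subseteq> I" and IH: "\<And>S'. S' \<subset> S \<Longrightarrow> avoidance_bound S'"
  shows "0 < card (avoiding S)"
proof (cases "S = {}")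
  case True
  then show ?thesis using finite_\<Omega> \<Omega>_nonempty by (simp add: avoiding_def card_gt_0_iff)
next
  case False
  then obtain s where "s \<in> S" by blast
  let ?S' = "S - {s}"
  have bound: "avoidance_bound ?S'" using \<open>s \<in> S\<close> by (intro IH) blast
  have "avoiding ?S' \<subseteq> avoiding S \<union> (A s \<inter> avoiding ?S')"
    using \<open>s \<in> S\<close> by (auto simp: avoiding_def)
  then have "card (avoiding ?S') \<le> card (avoiding S) + card (A s \<inter> avoiding ?S')"
    by (meson card_Un_le card_mono finite_Un finite_avoiding finite_Int order_trans)
  moreover have "real (card (A s \<inter> avoiding ?S')) \<le> real (card (avoiding ?S')) / (2 * d)"
    using bound \<open>s \<in> S\<close> assms(1) by (auto simp: avoidance_bound_def)
  moreover have "real (card (avoiding ?S')) / (2 * d) < real (card (avoiding ?S'))"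
    using bound d_ge_1 by (simp add: avoidance_bound_def field_simps)
  ultimately show ?thesis by linarith
qed

lemma avoidance_bound_holds:
  assumes "S \<subseteq> I"
  shows "avoidance_bound S"
  using finite_subset[OF assms finite_I] assms
proof (induction S rule: finite_psubset_induct)
  case (psubset S)
  have IH: "avoidance_bound S'" if "S' \<subset> S" for S'
    using psubset that by blast
  show ?case
    unfolding avoidance_bound_def
    using card_avoiding_pos[OF _ IH] card_event_avoiding_le[OF _ _ IH] psubset.prems by blast
qed

theorem exists_outside_all_events: "\<exists>\<omega>\<in>\<Omega>. \<forall>i\<in>I. \<omega> \<notin> A i"
proof -
  have "avoiding I \<noteq> {}"
    using avoidance_bound_holds[of I] by (auto simp: avoidance_bound_def)
  then show ?thesis by (auto simp: avoiding_def)
qed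

end

lemma card_PiE_split:
  assumes "D \<subseteq> X"
  shows "card {f \<in> PiE X (\<lambda>_. C). P (restrict f D) \<and> Q (restrict f (X - D))}
       = card {g \<in> PiE D (\<lambda>_. C). P g} * card {h \<in> PiE (X - D) (\<lambda>_. C). Q h}"
proof -
  let ?L = "{f \<in> PiE X (\<lambda>_. C). P (restrict f D) \<and> Q (restrict f (X - D))}"
  let ?R = "{g \<in> PiE D (\<lambda>_. C). P g} \<times> {h \<in> PiE (X - D) (\<lambda>_. C). Q h}"
  let ?join = "\<lambda>(g, h) x. if x \<in> D then g x else h x"
  have restrict_join: "restrict (?join (g, h)) D = g" "restrict (?join (g, h)) (X - D) = h"
    if "g \<in> PiE D (\<lambda>_. C)" "h \<in> PiE (X - D) (\<lambda>_. C)" for g h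
  proof -
    have "restrict (?join (g, h)) D = restrict g D"
      "restrict (?join (g, h)) (X - D) = restrict h (X - D)"
      by (auto intro: restrict_cong)
    then show "restrict (?join (g, h)) D = g" "restrict (?join (g, h)) (X - D) = h"
      using that by simp_all
  qed
  have "bij_betw (\<lambda>f. (restrict f D, restrict f (X - D))) ?L ?R"
  proof (rule bij_betwI)
    show "(\<lambda>f. (restrict f D, restrict f (X - D))) \<in> ?L \<rightarrow> ?R"
      using assms by (auto simp: restrict_PiE_iff)
    show "?join \<in> ?R \<rightarrow> ?L"
    proof
      fix gh assume "gh \<in> ?R"
      then obtain g h where gh: "gh = (g, h)"
        "g \<in> PiE D (\<lambda>_. C)" "P g" "h \<in> PiE (X - D) (\<lambda>_. C)" "Q h"
        by auto
      then have "?join gh \<in> PiE X (\<lambda>_. C)" using assms by (auto simp: PiE_iff extensional_def)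
      then show "?join gh \<in> ?L" using gh restrict_join by simp
    qed
    show "?join (restrict f D, restrict f (X - D)) = f" if "f \<in> ?L" for f
    proof
      fix x
      show "?join (restrict f D, restrict f (X - D)) x = f x"
        using that assms PiE_arb[of f X "\<lambda>_. C" x] by auto
    qed
    show "(restrict (?join gh) D, restrict (?join gh) (X - D)) = gh" if "gh \<in> ?R" for gh
      using that restrict_join by auto
  qed
  then show ?thesis
    by (simp add: bij_betw_same_card card_cartesian_product)
qed

lemma card_PiE_independent_le:
  assumes "finite D" "D \<subseteq> X"
    and P_local: "\<And>f g. (\<And>x. x \<in> D \<Longrightarrow> f x = g x) \<Longrightarrow> P f = P g"
    and Q_local: "\<And>f g. (\<And>x. x \<in> X - D \<Longrightarrow> f x = g x) \<Longrightarrow> Q f = Q g"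
    and P_bound: "real (card {g \<in> PiE D (\<lambda>_. C). P g}) \<le> p * real (card C) ^ card D"
  shows "real (card {f \<in> PiE X (\<lambda>_. C). P f \<and> Q f}) \<le> p * real (card {f \<in> PiE X (\<lambda>_. C). Q f})"
proof -
  have P_restrict: "P (restrict f D) = P f" for f
    by (rule P_local) simp
  have Q_restrict: "Q (restrict f (X - D)) = Q f" for f
    by (rule Q_local) simp
  define q where "q = card {h \<in> PiE (X - D) (\<lambda>_. C). Q h}"
  have "card {f \<in> PiE X (\<lambda>_. C). P f \<and> Q f} = card {g \<in> PiE D (\<lambda>_. C). P g} * q"
    using card_PiE_split[OF assms(2), of C P Q] by (simp add: P_restrict Q_restrict q_def)
  moreover have "card {f \<in> PiE X (\<lambda>_. C). Q f} = card C ^ card D * q"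
    using card_PiE_split[OF assms(2), of C "\<lambda>_. True" Q] assms(1)
    by (simp add: Q_restrict q_def card_funcsetE)
  ultimately show ?thesis
    using mult_right_mono[OF P_bound, of "real q"] by (simp add: mult.assoc)
qed

lemma card_PiE_rows:
  assumes "finite W"
  shows "card {g \<in> PiE (W \<times> E) (\<lambda>_. C). \<forall>u\<in>W. P (\<lambda>e\<in>E. g (u, e))}
       = card {\<phi> \<in> PiE E (\<lambda>_. C). P \<phi>} ^ card W"
proof -
  let ?L = "{g \<in> PiE (W \<times> E) (\<lambda>_. C). \<forall>u\<in>W. P (\<lambda>e\<in>E. g (u, e))}"
  let ?R = "PiE W (\<lambda>_. {\<phi> \<in> PiE E (\<lambda>_. C). P \<phi>})"
  let ?rows = "\<lambda>g. \<lambda>u\<in>W. \<lambda>e\<in>E. g (u, e)"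
  let ?uncurry = "\<lambda>\<Phi>. restrict (\<lambda>(u, e). \<Phi> u e) (W \<times> E)"
  have row_uncurry: "(\<lambda>e\<in>E. ?uncurry \<Phi> (u, e)) = \<Phi> u" if "\<Phi> \<in> ?R" "u \<in> W" for \<Phi> u
  proof -
    have "(\<lambda>e\<in>E. ?uncurry \<Phi> (u, e)) = restrict (\<Phi> u) E"
      using \<open>u \<in> W\<close> by (auto intro: restrict_cong)
    also have "\<dots> = \<Phi> u" using that by (auto simp: PiE_iff)
    finally show ?thesis .
  qed
  have "bij_betw ?rows ?L ?R"
  proof (rule bij_betwI)
    show "?rows \<in> ?L \<rightarrow> ?R"
      by (auto simp: PiE_iff)
    show "?uncurry \<in> ?R \<rightarrow> ?L"
      using row_uncurry by (auto simp: PiE_iff)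
    show "?uncurry (?rows g) = g" if "g \<in> ?L" for g
    proof
      fix x
      show "?uncurry (?rows g) x = g x"
        using that PiE_arb[of g "W \<times> E" "\<lambda>_. C" x] by (cases x) auto
    qed
    show "?rows (?uncurry \<Phi>) = \<Phi>" if "\<Phi> \<in> ?R" for \<Phi>
    proof
      fix u
      show "?rows (?uncurry \<Phi>) u = \<Phi> u"
        using that row_uncurry PiE_arb[of \<Phi> W _ u] by auto
    qed
  qed
  then show ?thesis
    using assms by (simp add: bij_betw_same_card card_PiE)
qed

lemma card_PiE_eq_at_le:
  assumes "finite E" "finite C" "a \<in> E" "b \<in> E" "a \<noteq> b"
  shows "card {\<phi> \<in> PiE E (\<lambda>_. C). \<phi> a = \<phi> b} \<le> card C ^ (card E - 1)"
proof -
  have "inj_on (\<lambda>\<phi>. restrict \<phi> (E - {b})) {\<phi> \<in> PiE E (\<lambda>_. C). \<phi> a = \<phi> b}"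
  proof (rule inj_onI)
    fix \<phi> \<psi>
    assume \<phi>: "\<phi> \<in> {\<phi> \<in> PiE E (\<lambda>_. C). \<phi> a = \<phi> b}" and \<psi>: "\<psi> \<in> {\<phi> \<in> PiE E (\<lambda>_. C). \<phi> a = \<phi> b}"
      and eq: "restrict \<phi> (E - {b}) = restrict \<psi> (E - {b})"
    have "\<phi> x = \<psi> x" if "x \<in> E" for x
      using that fun_cong[OF eq, of x] fun_cong[OF eq, of a] \<phi> \<psi> assms(3,5)
      by (cases "x = b") auto
    then show "\<phi> = \<psi>" using \<phi> \<psi> by (auto intro: PiE_ext)
  qed
  moreover have "(\<lambda>\<phi>. restrict \<phi> (E - {b})) ` {\<phi> \<in> PiE E (\<lambda>_. C). \<phi> a = \<phi> b} \<subseteq> PiE (E - {b}) (\<lambda>_. C)"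
    by (simp add: image_subset_iff restrict_PiE_iff PiE_iff)
  ultimately have "card {\<phi> \<in> PiE E (\<lambda>_. C). \<phi> a = \<phi> b} \<le> card (PiE (E - {b}) (\<lambda>_. C))"
    using assms(1,2) by (intro card_inj_on_le) (auto intro: finite_PiE)
  also have "\<dots> = card C ^ (card E - 1)"
    using assms(1,4) by (simp add: card_funcsetE)
  finally show ?thesis .
qed

lemma card_non_injective_le:
  assumes "finite E" "finite C"
  shows "card {\<phi> \<in> PiE E (\<lambda>_. C). \<not> inj_on \<phi> E} \<le> card E ^ 2 * card C ^ (card E - 1)"
proof -
  define pairs where "pairs = {(a, b) \<in> E \<times> E. a \<noteq> b}"
  have finite_pairs: "finite pairs"
    using assms(1) by (intro finite_subset[of pairs "E \<times> E"]) (auto simp: pairs_def)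
  have cover: "{\<phi> \<in> PiE E (\<lambda>_. C). \<not> inj_on \<phi> E}
      \<subseteq> (\<Union>(a, b) \<in> pairs. {\<phi> \<in> PiE E (\<lambda>_. C). \<phi> a = \<phi> b})"
    by (auto simp: inj_on_def pairs_def)
  have finite_eq: "finite {\<phi> \<in> PiE E (\<lambda>_. C). \<phi> a = \<phi> b}" for a b
    by (rule finite_subset[of _ "PiE E (\<lambda>_. C)"]) (auto intro: finite_PiE assms)
  have "card {\<phi> \<in> PiE E (\<lambda>_. C). \<not> inj_on \<phi> E}
      \<le> card (\<Union>(a, b) \<in> pairs. {\<phi> \<in> PiE E (\<lambda>_. C). \<phi> a = \<phi> b})"
    by (rule card_mono[OF _ cover]) (simp add: finite_pairs finite_eq case_prod_beta')
  also have "\<dots> \<le> (\<Sum>(a, b) \<in> pairs. card {\<phi> \<in> PiE E (\<lambda>_. C). \<phi> a = \<phi> b})"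
    using finite_pairs by (simp add: card_UN_le case_prod_beta')
  also have "\<dots> \<le> (\<Sum>(a, b) \<in> pairs. card C ^ (card E - 1))"
    using assms
    by (intro sum_mono) (auto simp: pairs_def simp del: One_nat_def intro: card_PiE_eq_at_le)
  also have "\<dots> = card pairs * card C ^ (card E - 1)"
    by simp
  also have "card pairs \<le> card E ^ 2"
    using card_mono[of "E \<times> E" pairs] assms(1)
    by (auto simp: pairs_def power2_eq_square card_cartesian_product)
  finally show ?thesis by (simp add: mult_right_mono)
qed

lemma card_PiE_non_injective_rows_le:
  assumes "finite W" "finite E" "finite C" "C \<noteq> {}"
  shows "real (card {g \<in> PiE (W \<times> E) (\<lambda>_. C). \<forall>u\<in>W. \<not> inj_on (\<lambda>e. g (u, e)) E})
       \<le> (real (card E) ^ 2 / real (card C)) ^ card W * real (card C) ^ card (W \<times> E)"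
proof -
  have k: "0 < real (card C)" using assms(3,4) by (simp add: card_gt_0_iff)
  have row: "real (card {\<phi> \<in> PiE E (\<lambda>_. C). \<not> inj_on \<phi> E})
      \<le> real (card E) ^ 2 / real (card C) * real (card C) ^ card E"
  proof (cases "E = {}")
    case True
    then show ?thesis by simp
  next
    case False
    then have "real (card C) ^ card E = real (card C) * real (card C) ^ (card E - 1)"
      using assms(2) by (simp flip: power_Suc add: card_gt_0_iff)
    then have "real (card E) ^ 2 / real (card C) * real (card C) ^ card E
        = real (card E ^ 2 * card C ^ (card E - 1))"
      using k by simp
    then show ?thesis
      using card_non_injective_le[OF assms(2,3)] by (simp only: of_nat_le_iff)
  qed
  have "card {g \<in> PiE (W \<times> E) (\<lambda>_. C). \<forall>u\<in>W. \<not> inj_on (\<lambda>e. g (u, e)) E}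
      = card {\<phi> \<in> PiE E (\<lambda>_. C). \<not> inj_on \<phi> E} ^ card W"
    using card_PiE_rows[OF assms(1), of E C "\<lambda>\<phi>. \<not> inj_on \<phi> E"] by simp
  then have "real (card {g \<in> PiE (W \<times> E) (\<lambda>_. C). \<forall>u\<in>W. \<not> inj_on (\<lambda>e. g (u, e)) E})
      \<le> (real (card E) ^ 2 / real (card C) * real (card C) ^ card E) ^ card W"
    using row by (simp add: power_mono)
  also have "\<dots> = (real (card E) ^ 2 / real (card C)) ^ card W * (real (card C) ^ card E) ^ card W"
    by (rule power_mult_distrib)
  also have "(real (card C) ^ card E) ^ card W = real (card C) ^ card (W \<times> E)"
    by (simp add: card_cartesian_product flip: power_mult) (simp add: mult.commute)
  finally show ?thesis .
qed

definition complete_edges_on :: "nat \<Rightarrow> 'a set \<Rightarrow> 'a set set" where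
  "complete_edges_on r W = {e. e \<subseteq> W \<and> card e = r}"

lemma card_complete_edges_on: "finite W \<Longrightarrow> card (complete_edges_on r W) = card W choose r"
  by (simp add: complete_edges_on_def n_subsets)

lemma finite_complete_edges_on: "finite W \<Longrightarrow> finite (complete_edges_on r W)"
  unfolding complete_edges_on_def by (rule finite_subset[of _ "Pow W"]) auto

definition no_rainbow_vertex :: "nat \<Rightarrow> 'a set \<Rightarrow> ('a \<times> 'a set \<Rightarrow> 'c) \<Rightarrow> bool" where
  "no_rainbow_vertex r W g \<longleftrightarrow> (\<forall>u\<in>W. \<not> inj_on (\<lambda>e. g (u, e)) (complete_edges_on r W))"

lemma no_rainbow_vertex_cong:
  assumes "\<And>x. x \<in> W \<times> complete_edges_on r W \<Longrightarrow> g x = g' x"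
  shows "no_rainbow_vertex r W g = no_rainbow_vertex r W g'"
proof -
  have "inj_on (\<lambda>e. g (u, e)) (complete_edges_on r W)
      = inj_on (\<lambda>e. g' (u, e)) (complete_edges_on r W)"
    if "u \<in> W" for u
    using assms that by (intro inj_on_cong) auto
  then show ?thesis by (auto simp: no_rainbow_vertex_def)
qed

lemma card_no_rainbow_vertex_conditional_le:
  assumes "finite W" "finite C" "C \<noteq> {}" "W \<times> complete_edges_on r W \<subseteq> X"
    and "\<And>W'. W' \<in> T \<Longrightarrow> W' \<times> complete_edges_on r W' \<subseteq> X"
    and "\<And>W'. W' \<in> T \<Longrightarrow> complete_edges_on r W \<inter> complete_edges_on r W' = {}"
  shows "real (card {g \<in> PiE X (\<lambda>_. C). no_rainbow_vertex r W g \<and> (\<forall>W'\<in>T. \<not> no_rainbow_vertex r W' g)})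
    \<le> (real (card W choose r) ^ 2 / real (card C)) ^ card W
       * real (card {g \<in> PiE X (\<lambda>_. C). \<forall>W'\<in>T. \<not> no_rainbow_vertex r W' g})"
proof (rule card_PiE_independent_le[where D = "W \<times> complete_edges_on r W"])
  show "finite (W \<times> complete_edges_on r W)"
    using assms(1) by (simp add: finite_complete_edges_on)
  show "no_rainbow_vertex r W f = no_rainbow_vertex r W g"
    if "\<And>x. x \<in> W \<times> complete_edges_on r W \<Longrightarrow> f x = g x" for f g :: "_ \<Rightarrow> 'c"
    using that by (rule no_rainbow_vertex_cong)
  show "(\<forall>W'\<in>T. \<not> no_rainbow_vertex r W' f) = (\<forall>W'\<in>T. \<not> no_rainbow_vertex r W' g)"
    if "\<And>x. x \<in> X - W \<times> complete_edges_on r W \<Longrightarrow> f x = g x" for f g :: "_ \<Rightarrow> 'c"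
  proof -
    have "no_rainbow_vertex r W' f = no_rainbow_vertex r W' g" if "W' \<in> T" for W'
      using assms(5,6)[OF \<open>W' \<in> T\<close>] \<open>\<And>x. x \<in> X - _ \<Longrightarrow> f x = g x\<close>
      by (intro no_rainbow_vertex_cong) blast
    then show ?thesis by blast
  qed
  have "card (complete_edges_on r W) = card W choose r"
    using assms(1) by (rule card_complete_edges_on)
  then show "real (card {g \<in> PiE (W \<times> complete_edges_on r W) (\<lambda>_. C). no_rainbow_vertex r W g})
      \<le> (real (card W choose r) ^ 2 / real (card C)) ^ card W
        * real (card C) ^ card (W \<times> complete_edges_on r W)"
    using card_PiE_non_injective_rows_le
        [OF assms(1) finite_complete_edges_on[OF assms(1), of r] assms(2,3)]
    by (simp add: no_rainbow_vertex_def)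
qed (use assms(4) in simp)

lemma card_supersets_le:
  assumes "finite U" "e \<subseteq> U" "card e = r" "r \<le> h"
  shows "card {W. W \<subseteq> U \<and> card W = h \<and> e \<subseteq> W} \<le> card U ^ (h - r)"
proof -
  let ?L = "{W. W \<subseteq> U \<and> card W = h \<and> e \<subseteq> W}"
  have "inj_on (\<lambda>W. W - e) ?L"
    by (rule inj_onI) blast
  moreover have "(\<lambda>W. W - e) ` ?L \<subseteq> {S. S \<subseteq> U \<and> card S = h - r}"
    using assms by (auto simp: card_Diff_subset finite_subset)
  ultimately have "card ?L \<le> card {S. S \<subseteq> U \<and> card S = h - r}"
    using assms(1) by (intro card_inj_on_le) auto
  also have "\<dots> = card U choose (h - r)"
    using assms(1) by (rule n_subsets)
  also have "\<dots> \<le> card U ^ (h - r)"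
    by (cases "h - r \<le> card U") (simp_all add: binomial_le_pow binomial_eq_0)
  finally show ?thesis .
qed

lemma card_edge_sharing_le:
  assumes "finite U" "W \<subseteq> U" "card W = h" "r \<le> h"
  shows "card {W'. W' \<subseteq> U \<and> card W' = h \<and> complete_edges_on r W \<inter> complete_edges_on r W' \<noteq> {}}
    \<le> (h choose r) * card U ^ (h - r)"
proof -
  have finite_W: "finite W" using assms(1,2) by (rule finite_subset[rotated])
  have "{W'. W' \<subseteq> U \<and> card W' = h \<and> complete_edges_on r W \<inter> complete_edges_on r W' \<noteq> {}}
      = (\<Union>e \<in> complete_edges_on r W. {W'. W' \<subseteq> U \<and> card W' = h \<and> e \<subseteq> W'})"
    by (auto simp: complete_edges_on_def)
  then have "card {W'. W' \<subseteq> U \<and> card W' = h \<and> complete_edges_on r W \<inter> complete_edges_on r W' \<noteq> {}}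
      \<le> (\<Sum>e \<in> complete_edges_on r W. card {W'. W' \<subseteq> U \<and> card W' = h \<and> e \<subseteq> W'})"
    using finite_complete_edges_on[OF finite_W] by (simp add: card_UN_le)
  also have "\<dots> \<le> (\<Sum>e \<in> complete_edges_on r W. card U ^ (h - r))"
    using assms by (intro sum_mono card_supersets_le) (auto simp: complete_edges_on_def)
  also have "\<dots> = (h choose r) * card U ^ (h - r)"
    using assms(3) finite_W by (simp add: card_complete_edges_on)
  finally show ?thesis .
qed

locale random_local_coloring =
  fixes n r h k :: nat
  assumes r_le_h: "r \<le> h" and n_pos: "1 \<le> n"
    and enough_colors: "4 * real (h choose r) ^ (2 * h + 1) * real n ^ (h - r) \<le> real k ^ h"
begin

definition positions :: "(nat \<times> nat set) set" where
  "positions = {..<n} \<times> complete_edges n r"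

definition colorings :: "(nat \<times> nat set \<Rightarrow> nat) set" where
  "colorings = PiE positions (\<lambda>_. {1..k})"

definition h_sets :: "nat set set" where
  "h_sets = {W. W \<subseteq> {..<n} \<and> card W = h}"

definition bad_event :: "nat set \<Rightarrow> (nat \<times> nat set \<Rightarrow> nat) set" where
  "bad_event W = {g \<in> colorings. no_rainbow_vertex r W g}"

definition dependent :: "nat set \<Rightarrow> nat set set" where
  "dependent W = {W' \<in> h_sets. W' \<noteq> W \<and> complete_edges_on r W \<inter> complete_edges_on r W' \<noteq> {}}"

definition event_prob :: real where
  "event_prob = (real (h choose r) ^ 2 / real k) ^ h"

definition max_degree :: real where
  "max_degree = real (h choose r) * real n ^ (h - r)"

lemma max_degree_ge_1: "1 \<le> max_degree"
  and colors_ge_4: "4 \<le> 4 * real (h choose r) ^ (2 * h + 1) * real n ^ (h - r)"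
proof -
  have binomial: "1 \<le> real (h choose r)"
    using zero_less_binomial[OF r_le_h] by linarith
  moreover have n_power: "1 \<le> real n ^ (h - r)"
    using n_pos by simp
  ultimately show "1 \<le> max_degree"
    unfolding max_degree_def using mult_mono[of 1 _ 1] by fastforce
  have "1 \<le> real (h choose r) ^ (2 * h + 1)"
    using binomial by (rule one_le_power)
  then show "4 \<le> 4 * real (h choose r) ^ (2 * h + 1) * real n ^ (h - r)"
    using n_power mult_mono[of 1 _ 1] by fastforce
qed

lemma k_pos: "0 < k"
proof (rule ccontr)
  assume "\<not> 0 < k"
  then have "real k ^ h \<le> 1" by (simp add: power_0_left)
  then show False using colors_ge_4 enough_colors by linarith
qed

lemma event_prob_max_degree_le: "4 * event_prob * max_degree \<le> 1"
proof -
  have "event_prob = real (h choose r) ^ (2 * h) / real k ^ h"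
    by (simp add: event_prob_def power_divide power_mult)
  then have "4 * event_prob * max_degree
      = 4 * real (h choose r) ^ (2 * h + 1) * real n ^ (h - r) / real k ^ h"
    by (simp add: max_degree_def mult_ac)
  then show ?thesis
    using enough_colors k_pos by (simp add: divide_le_eq_1)
qed

lemma finite_h_sets: "finite h_sets"
  unfolding h_sets_def by (rule finite_subset[of _ "Pow {..<n}"]) auto

lemma edges_in_positions: "W \<in> h_sets \<Longrightarrow> W \<times> complete_edges_on r W \<subseteq> positions"
  by (auto simp: positions_def h_sets_def complete_edges_on_def complete_edges_def)

lemma card_dependent_le: "W \<in> h_sets \<Longrightarrow> real (card (dependent W)) \<le> max_degree"
proof -
  assume "W \<in> h_sets"
  have "card (dependent W) \<le> card {W'. W' \<subseteq> {..<n} \<and> card W' = h \<and>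
      complete_edges_on r W \<inter> complete_edges_on r W' \<noteq> {}}"
    using finite_h_sets by (intro card_mono) (auto simp: dependent_def h_sets_def)
  also have "\<dots> \<le> (h choose r) * n ^ (h - r)"
    using card_edge_sharing_le[of "{..<n}" W h r] \<open>W \<in> h_sets\<close> r_le_h by (simp add: h_sets_def)
  finally show ?thesis
    unfolding max_degree_def by (simp flip: of_nat_power of_nat_mult)
qed

lemma bad_event_conditional_le:
  assumes "W \<in> h_sets" "T \<subseteq> h_sets - dependent W - {W}"
  shows "real (card (bad_event W \<inter> (colorings - \<Union>(bad_event ` T))))
    \<le> event_prob * real (card (colorings - \<Union>(bad_event ` T)))"
proof -
  have "card W = h" "finite W"
    using assms(1) by (auto simp: h_sets_def intro: finite_subset)
  have "real (card {g \<in> colorings. no_rainbow_vertex r W g \<and> (\<forall>W'\<in>T. \<not> no_rainbow_vertex r W' g)})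
      \<le> (real (card W choose r) ^ 2 / real (card {1..k})) ^ card W
        * real (card {g \<in> colorings. \<forall>W'\<in>T. \<not> no_rainbow_vertex r W' g})"
    unfolding colorings_def
    by (rule card_no_rainbow_vertex_conditional_le)
      (use \<open>finite W\<close> k_pos assms edges_in_positions in \<open>auto simp: dependent_def\<close>)
  moreover have "bad_event W \<inter> (colorings - \<Union>(bad_event ` T))
      = {g \<in> colorings. no_rainbow_vertex r W g \<and> (\<forall>W'\<in>T. \<not> no_rainbow_vertex r W' g)}"
    "colorings - \<Union>(bad_event ` T) = {g \<in> colorings. \<forall>W'\<in>T. \<not> no_rainbow_vertex r W' g}"
    by (auto simp: bad_event_def)
  ultimately show ?thesis
    by (simp add: event_prob_def \<open>card W = h\<close>)
qed

sublocale counting_local_lemma colorings bad_event h_sets dependent max_degree event_prob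
proof
  show "finite colorings"
    unfolding colorings_def positions_def
    by (intro finite_PiE finite_SigmaI) (auto simp: complete_edges_def)
  show "colorings \<noteq> {}"
    using k_pos by (simp add: colorings_def PiE_eq_empty_iff)
qed (use finite_h_sets max_degree_ge_1 event_prob_max_degree_le card_dependent_le
      bad_event_conditional_le in \<open>auto simp: dependent_def event_prob_def\<close>)

lemma exists_coloring_with_rainbow_vertices:
  "\<exists>f. (\<forall>v<n. \<forall>e\<in>complete_edges n r. f v e \<in> {1..k}) \<and>
    (\<forall>W. W \<subseteq> {..<n} \<and> card W = h \<longrightarrow> (\<exists>u\<in>W. inj_on (f u) (complete_edges_on r W)))"
proof -
  obtain g where "g \<in> colorings" and good: "\<forall>W\<in>h_sets. g \<notin> bad_event W"
    using exists_outside_all_events by blast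
  show ?thesis
  proof (intro exI[of _ "\<lambda>v e. g (v, e)"] conjI allI impI ballI)
    show "g (v, e) \<in> {1..k}" if "v < n" "e \<in> complete_edges n r" for v e
      using \<open>g \<in> colorings\<close> that by (auto simp: colorings_def positions_def PiE_iff)
    show "\<exists>u\<in>W. inj_on (\<lambda>e. g (u, e)) (complete_edges_on r W)"
      if "W \<subseteq> {..<n} \<and> card W = h" for W
      using good \<open>g \<in> colorings\<close> that by (auto simp: h_sets_def bad_event_def no_rainbow_vertex_def)
  qed
qed

end

lemma copy_edges_subset:
  assumes "is_rgraph r V E" "is_copy n V E W F"
  shows "W \<subseteq> {..<n}" "card W = card V" "F \<subseteq> complete_edges_on r W"
proof -
  obtain g where "W \<subseteq> {..<n}" and g: "bij_betw g V W" and F: "F = (\<lambda>e. g ` e) ` E"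
    using assms(2) by (auto simp: is_copy_def)
  then show "W \<subseteq> {..<n}" "card W = card V"
    by (simp_all add: bij_betw_same_card)
  show "F \<subseteq> complete_edges_on r W"
  proof
    fix x assume "x \<in> F"
    then obtain e where "e \<in> E" "x = g ` e" using F by blast
    moreover have "e \<subseteq> V" "card e = r"
      using assms(1) \<open>e \<in> E\<close> by (auto simp: is_rgraph_def)
    moreover have "inj_on g e"
      using g \<open>e \<subseteq> V\<close> by (auto simp: bij_betw_def intro: inj_on_subset)
    ultimately show "x \<in> complete_edges_on r W"
      using g by (auto simp: complete_edges_on_def card_image bij_betw_def)
  qed
qed

lemma local_chromatic_le:
  assumes "is_rgraph r V E"
    and "\<forall>v<n. \<forall>e\<in>complete_edges n r. f v e \<in> {1..k}"
    and "\<forall>W. W \<subseteq> {..<n} \<and> card W = card V \<longrightarrow> (\<exists>u\<in>W. inj_on (f u) (complete_edges_on r W))"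
  shows "local_chromatic r n V E \<le> k"
proof -
  have "local_coloring n r V E k f"
    unfolding local_coloring_def
    using assms copy_edges_subset[OF assms(1)] by (meson inj_on_subset)
  then show ?thesis
    unfolding local_chromatic_def by (intro Least_le) blast
qed

lemma power_powr_divide:
  assumes "0 < x" "0 < h"
  shows "(x powr (real m / real h)) ^ h = x ^ m"
  using assms by (simp add: powr_power powr_realpow)

lemma enough_colors_bound:
  fixes n r h :: nat
  assumes "r \<le> h" "1 \<le> h" "1 \<le> n"
  shows "4 * real (h choose r) ^ (2 * h + 1) * real n ^ (h - r)
    \<le> (4 * real n powr ((real h - real r) / real h) * real h powr (2 * real r + real r / real h)) ^ h"
proof -
  have "real (h choose r) \<le> real h ^ r"
    using binomial_le_pow[OF assms(1)] by (metis of_nat_le_iff of_nat_power)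
  then have "real (h choose r) ^ (2 * h + 1) \<le> (real h ^ r) ^ (2 * h + 1)"
    by (rule power_mono) simp
  also have "\<dots> = real h ^ (r * (2 * h + 1))"
    by (rule power_mult[symmetric])
  finally have binomial_power: "real (h choose r) ^ (2 * h + 1) \<le> real h ^ (r * (2 * h + 1))" .
  have "(4::real) \<le> 4 ^ h"
    using power_increasing[of 1 h "4::real"] assms(2) by simp
  then have "4 * real (h choose r) ^ (2 * h + 1) * real n ^ (h - r)
      \<le> 4 ^ h * real h ^ (r * (2 * h + 1)) * real n ^ (h - r)"
    using binomial_power by (intro mult_right_mono mult_mono) simp_all
  also have "\<dots> = (4 * real n powr ((real h - real r) / real h)
      * real h powr (2 * real r + real r / real h)) ^ h"
  proof -
    have "(real n powr ((real h - real r) / real h)) ^ h = real n ^ (h - r)"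
      using power_powr_divide[of "real n" h "h - r"] assms by (simp add: of_nat_diff)
    moreover have "(real h powr (2 * real r + real r / real h)) ^ h = real h ^ (r * (2 * h + 1))"
      using power_powr_divide[of "real h" h "r * (2 * h + 1)"] assms by (simp add: field_simps)
    ultimately show ?thesis
      by (simp add: power_mult_distrib)
  qed
  finally show ?thesis .
qed

lemma random_local_coloring_exists:
  fixes n r h :: nat
  assumes "r \<le> h" "1 \<le> h" "1 \<le> n"
  shows "\<exists>k. random_local_coloring n r h k \<and>
    real k \<le> 8 * real n powr ((real h - real r) / real h) * real h powr (2 * real r + real r / real h)"
proof -
  define K where
    "K = 4 * real n powr ((real h - real r) / real h) * real h powr (2 * real r + real r / real h)"
  have "1 \<le> real n powr ((real h - real r) / real h)"
    using assms by (intro ge_one_powr_ge_zero) simp_all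
  moreover have "1 \<le> real h powr (2 * real r + real r / real h)"
    using assms by (intro ge_one_powr_ge_zero) simp_all
  ultimately have "4 \<le> K"
    unfolding K_def using mult_mono[of 1 _ 1] by fastforce
  define k where "k = nat \<lceil>K\<rceil>"
  have "K \<le> real k" "real k \<le> K + 1"
    using \<open>4 \<le> K\<close> by (auto simp: k_def)
  have "4 * real (h choose r) ^ (2 * h + 1) * real n ^ (h - r) \<le> K ^ h"
    unfolding K_def using assms by (rule enough_colors_bound)
  also have "\<dots> \<le> real k ^ h"
    using \<open>K \<le> real k\<close> \<open>4 \<le> K\<close> by (intro power_mono) simp_all
  finally have "random_local_coloring n r h k"
    using assms by unfold_locales
  then show ?thesis
    using \<open>real k \<le> K + 1\<close> \<open>4 \<le> K\<close> by (intro exI[of _ k]) (simp add: K_def)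
qed

theorem theorem6:
  "\<exists>c>0. \<forall>(r::nat) (n::nat) (V::nat set) E.
     is_rgraph r V E \<longrightarrow> 1 \<le> r \<longrightarrow> r \<le> card V \<longrightarrow>
     real (local_chromatic r n V E)
       \<le> c * real n powr ((real (card V) - real r) / real (card V))
           * real (card V) powr (2 * real r + real r / real (card V))"
proof (intro exI[of _ "8::real"] conjI allI impI)
  fix r n :: nat and V :: "nat set" and E
  assume rg: "is_rgraph r V E" and "1 \<le> r" "r \<le> card V"
  then have "1 \<le> card V" by simp
  show "real (local_chromatic r n V E) \<le> 8 * real n powr ((real (card V) - real r) / real (card V))
      * real (card V) powr (2 * real r + real r / real (card V))"
  proof (cases "n = 0")
    case True
    then have "local_chromatic r n V E \<le> 0"
      using \<open>1 \<le> card V\<close> by (intro local_chromatic_le[OF rg, of _ "\<lambda>_ _. 0"]) auto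
    then show ?thesis by simp
  next
    case False
    then have "1 \<le> n" by simp
    then obtain k where "random_local_coloring n r (card V) k" and k_le: "real k \<le> 8
        * real n powr ((real (card V) - real r) / real (card V))
        * real (card V) powr (2 * real r + real r / real (card V))"
      using random_local_coloring_exists[OF \<open>r \<le> card V\<close> \<open>1 \<le> card V\<close>] by blast
    then have "local_chromatic r n V E \<le> k"
      using random_local_coloring.exists_coloring_with_rainbow_vertices local_chromatic_le[OF rg]
      by blast
    then show ?thesis using k_le by simp
  qed
qed simp

end
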